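(* Let $f:[0,1]\to\mathbb{R}$ with $f(0),f(1)\in\mathbb{Z}$. Set $\Phi(x):=6\big(x\ln x+(1-x)\ln(1-x)\big)$. (a) If $f(x)-\Phi(x)$ is convex on $[0,1]$, then $\widetilde{B}_n(f)$ and $\widehat{B}_n(f)$ are convex on $[0,1]$ for all $n\in\mathbb{N}_+$. (b) If $f(x)+\Phi(x)$ is concave on $[0,1]$, then $\widetilde{B}_n(f)$ and $\widehat{B}_n(f)$ are concave on $[0,1]$ for all $n\in\mathbb{N}_+$.
   Context: $\Phi$ is taken with the usual continuous extension $0\ln 0=0$ at $x=0,1$. For $n\in\mathbb{N}_+$ and $f:[0,1]\to\mathbb{R}$, define $\widetilde{B}_n(f)(x):=\sum_{k=0}^n \left[f\left(\frac{k}{n}\right)\binom{n}{k}\right]x^k(1-x)^{n-k}$, where $[\alpha]$ is the largest integer $\le\alpha$, and $\widehat{B}_n(f)(x):=\sum_{k=0}^n \left\langle f\left(\frac{k}{n}\right)\binom{n}{k}\right\rangle x^k(1-x)^{n-k}$, where $\langle\alpha\rangle$ is the integer nearest to $\alpha$ (when $\alpha$ is a half-integer, $\langle\alpha\rangle$ may be either neighbouring integer, chosen arbitrarily; the result holds for any such choice). *)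

theory Defs
  imports "HOL-Analysis.Analysis"
begin

definition xlnx :: "real \<Rightarrow> real" where
  "xlnx x = (if x = 0 then 0 else x * ln x)"

definition Phi :: "real \<Rightarrow> real" where
  "Phi x = 6 * (xlnx x + xlnx (1 - x))"

definition Btilde :: "nat \<Rightarrow> (real \<Rightarrow> real) \<Rightarrow> real \<Rightarrow> real" where
  "Btilde n f x = (\<Sum>k=0..n. real_of_int \<lfloor>f (real k / real n) * real (n choose k)\<rfloor>
                      * x ^ k * (1 - x) ^ (n - k))"

text \<open>z is an integer nearest to a (ties may go either way).\<close>
definition nearest_int :: "real \<Rightarrow> int \<Rightarrow> bool" where
  "nearest_int a z \<longleftrightarrow> \<bar>real_of_int z - a\<bar> \<le> 1/2"

text \<open>Nearest-integer-rounded Bernstein polynomial, for a given choice c of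
  rounded coefficients (c k must be a nearest integer to f(k/n) * (n choose k)).\<close>
definition Bhat :: "nat \<Rightarrow> (nat \<Rightarrow> int) \<Rightarrow> real \<Rightarrow> real" where
  "Bhat n c x = (\<Sum>k=0..n. real_of_int (c k) * x ^ k * (1 - x) ^ (n - k))"

end

theory Submission
  imports Defs
begin

text \<open>Writing \<open>b k = a k / (n choose k)\<close>, the polynomial \<open>\<Sum>k. a k x^k (1 - x)^(n - k)\<close>
  is the Bernstein polynomial of \<open>b\<close>. Its second derivative is \<open>n (n - 1)\<close> times the
  Bernstein polynomial of the second differences of \<open>b\<close>, so it is convex on \<open>[0, 1]\<close> once
  these differences are nonnegative. For rounded coefficients \<open>b k = f (k/n) - d k\<close>, where
  \<open>|d k| \<le> 1 / (k (n - k))\<close> since \<open>n choose k \<ge> k (n - k)\<close>, and \<open>d 0 = d n = 0\<close> since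
  \<open>f 0\<close> and \<open>f 1\<close> are integers; so the errors lower the second difference at \<open>m\<close> by at
  most \<open>6 / (m (n - m))\<close>. Convexity of \<open>f - \<Phi>\<close> bounds the second difference of \<open>f\<close>
  at \<open>x = m/n\<close> with step \<open>h = 1/n\<close> from below by that of \<open>\<Phi>\<close>, which is at least
  \<open>6 h\<^sup>2 / (x (1 - x)) = 6 / (m (n - m))\<close> since \<open>(1 - t) ln (1 - t) + (1 + t) ln (1 + t) \<ge> t\<^sup>2\<close>.
  The concave case follows by passing to \<open>-f\<close>.\<close>

definition bernstein_poly :: "nat \<Rightarrow> (nat \<Rightarrow> real) \<Rightarrow> real \<Rightarrow> real" where
  "bernstein_poly n b x = (\<Sum>k\<le>n. b k * Bernstein n k x)"

definition fwd_diff :: "(nat \<Rightarrow> real) \<Rightarrow> nat \<Rightarrow> real" where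
  "fwd_diff b k = b (Suc k) - b k"

lemma Bernstein_Suc_0: "Bernstein (Suc n) 0 x = (1 - x) * Bernstein n 0 x"
  by (simp add: Bernstein_def)

lemma Bernstein_Suc_Suc:
  "Bernstein (Suc n) (Suc k) x = x * Bernstein n k x + (1 - x) * Bernstein n (Suc k) x"
proof (cases "k < n")
  case True
  then have "n - k = Suc (n - Suc k)"
    by simp
  then show ?thesis
    by (simp add: Bernstein_def algebra_simps)
qed (simp add: Bernstein_def binomial_eq_0)

lemma bernstein_poly_Suc:
  "bernstein_poly (Suc n) b x = (1 - x) * bernstein_poly n b x + x * bernstein_poly n (\<lambda>k. b (Suc k)) x"
proof -
  have "bernstein_poly (Suc n) b x
      = (1 - x) * (b 0 * Bernstein n 0 x + (\<Sum>k\<le>n. b (Suc k) * Bernstein n (Suc k) x))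
        + x * (\<Sum>k\<le>n. b (Suc k) * Bernstein n k x)"
    unfolding bernstein_poly_def sum.atMost_Suc_shift Bernstein_Suc_0 Bernstein_Suc_Suc
    by (simp add: distrib_left distrib_right sum.distrib sum_distrib_left mult_ac)
  also have "b 0 * Bernstein n 0 x + (\<Sum>k\<le>n. b (Suc k) * Bernstein n (Suc k) x)
      = (\<Sum>k\<le>Suc n. b k * Bernstein n k x)"
    by (rule sum.atMost_Suc_shift[symmetric])
  also have "\<dots> = bernstein_poly n b x"
    by (simp add: bernstein_poly_def Bernstein_def)
  finally show ?thesis
    by (simp add: bernstein_poly_def)
qed

lemma bernstein_poly_diff:
  "bernstein_poly n c x - bernstein_poly n b x = bernstein_poly n (\<lambda>k. c k - b k) x"
  by (simp add: bernstein_poly_def left_diff_distrib sum_subtractf)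

lemma bernstein_poly_nonneg:
  "x \<in> {0..1} \<Longrightarrow> (\<And>k. k \<le> n \<Longrightarrow> 0 \<le> b k) \<Longrightarrow> 0 \<le> bernstein_poly n b x"
  unfolding bernstein_poly_def by (intro sum_nonneg mult_nonneg_nonneg Bernstein_nonneg) auto

lemma has_real_derivative_bernstein_poly:
  "(bernstein_poly n b has_real_derivative real n * bernstein_poly (n - 1) (fwd_diff b) x) (at x)"
proof (induction n arbitrary: b)
  case 0
  then show ?case
    by (simp add: bernstein_poly_def Bernstein_def)
next
  case (Suc n)
  let ?Sb = "\<lambda>k. b (Suc k)" and ?D = "\<lambda>c. bernstein_poly (n - 1) (fwd_diff c) x"
  have "bernstein_poly (Suc n) b = (\<lambda>x. (1 - x) * bernstein_poly n b x + x * bernstein_poly n ?Sb x)"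
    by (rule ext) (rule bernstein_poly_Suc)
  moreover have "((\<lambda>x. (1 - x) * bernstein_poly n b x + x * bernstein_poly n ?Sb x) has_real_derivative
      (bernstein_poly n ?Sb x - bernstein_poly n b x) + real n * ((1 - x) * ?D b + x * ?D ?Sb)) (at x)"
    by (rule derivative_eq_intros Suc.IH refl | simp add: algebra_simps)+
  moreover have "bernstein_poly n ?Sb x - bernstein_poly n b x = bernstein_poly n (fwd_diff b) x"
    by (simp add: bernstein_poly_diff fwd_diff_def[abs_def])
  moreover have "real n * ((1 - x) * ?D b + x * ?D ?Sb) = real n * bernstein_poly n (fwd_diff b) x"
    by (cases n) (simp_all add: bernstein_poly_Suc fwd_diff_def[abs_def])
  ultimately show ?case
    by (simp add: algebra_simps)
qed

lemma convex_on_bernstein_poly: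
  assumes "\<And>k. k + 2 \<le> n \<Longrightarrow> 0 \<le> fwd_diff (fwd_diff b) k"
  shows "convex_on {0..1} (bernstein_poly n b)"
proof (rule f''_ge0_imp_convex[where f' = "\<lambda>x. real n * bernstein_poly (n - 1) (fwd_diff b) x"
      and f'' = "\<lambda>x. real n * (real (n - 1) * bernstein_poly (n - 2) (fwd_diff (fwd_diff b)) x)"])
  fix x :: real
  show "(bernstein_poly n b has_real_derivative real n * bernstein_poly (n - 1) (fwd_diff b) x) (at x)"
    by (rule has_real_derivative_bernstein_poly)
  show "((\<lambda>x. real n * bernstein_poly (n - 1) (fwd_diff b) x) has_real_derivative
      real n * (real (n - 1) * bernstein_poly (n - 2) (fwd_diff (fwd_diff b)) x)) (at x)"
    using has_real_derivative_bernstein_poly[of "n - 1" "fwd_diff b" x]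
    by (simp add: DERIV_cmult numeral_2_eq_2)
  assume "x \<in> {0..1}"
  show "0 \<le> real n * (real (n - 1) * bernstein_poly (n - 2) (fwd_diff (fwd_diff b)) x)"
  proof (cases "n \<ge> 2")
    case True
    then show ?thesis
      using \<open>x \<in> {0..1}\<close> assms by (intro mult_nonneg_nonneg bernstein_poly_nonneg) auto
  next
    case False
    then have "n = 0 \<or> n = 1"
      by auto
    then show ?thesis
      by auto
  qed
qed simp

lemma two_mult_le_ln_one_plus_minus_ln_one_minus:
  fixes t :: real
  assumes "0 \<le> t" "t < 1"
  shows "2 * t \<le> ln (1 + t) - ln (1 - t)"
proof -
  have "ln (1 + 0) - ln (1 - 0) - 2 * 0 \<le> ln (1 + t) - ln (1 - t) - 2 * t"
  proof (rule DERIV_nonneg_imp_nondecreasing[OF \<open>0 \<le> t\<close>])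
    fix s :: real
    assume s: "0 \<le> s" "s \<le> t"
    then have pos: "0 < 1 - s" "0 < 1 + s"
      using assms by auto
    have "((\<lambda>s. ln (1 + s) - ln (1 - s) - 2 * s) has_real_derivative 1 / (1 + s) + 1 / (1 - s) - 2) (at s)"
      using pos by (auto intro!: derivative_eq_intros)
    moreover have "1 / (1 + s) + 1 / (1 - s) - 2 = 2 * s\<^sup>2 / ((1 + s) * (1 - s))"
      using pos by (simp add: divide_simps) (simp add: algebra_simps power2_eq_square)
    moreover have "0 \<le> 2 * s\<^sup>2 / ((1 + s) * (1 - s))"
      using pos by simp
    ultimately show "\<exists>y. ((\<lambda>s. ln (1 + s) - ln (1 - s) - 2 * s) has_real_derivative y) (at s) \<and> 0 \<le> y"
      by auto
  qed
  then show ?thesis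
    by simp
qed

lemma square_le_xlnx_one_minus_add_xlnx_one_plus:
  fixes t :: real
  assumes "0 \<le> t" "t \<le> 1"
  shows "t\<^sup>2 \<le> xlnx (1 - t) + xlnx (1 + t)"
proof (cases "t = 1")
  case True
  then show ?thesis
    using ln2_ge_two_thirds by (simp add: xlnx_def)
next
  case False
  with assms have "t < 1"
    by simp
  have "(1 - 0) * ln (1 - 0) + (1 + 0) * ln (1 + 0) - 0\<^sup>2
      \<le> (1 - t) * ln (1 - t) + (1 + t) * ln (1 + t) - t\<^sup>2"
  proof (rule DERIV_nonneg_imp_nondecreasing[OF \<open>0 \<le> t\<close>])
    fix s :: real
    assume s: "0 \<le> s" "s \<le> t"
    then have pos: "0 < 1 - s" "0 < 1 + s"
      using \<open>t < 1\<close> by auto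
    have "((\<lambda>s. (1 - s) * ln (1 - s) + (1 + s) * ln (1 + s) - s\<^sup>2)
        has_real_derivative ln (1 + s) - ln (1 - s) - 2 * s) (at s)"
      using pos by (auto intro!: derivative_eq_intros simp: divide_simps)
    moreover have "0 \<le> ln (1 + s) - ln (1 - s) - 2 * s"
      using two_mult_le_ln_one_plus_minus_ln_one_minus[of s] s \<open>t < 1\<close> by simp
    ultimately show "\<exists>y. ((\<lambda>s. (1 - s) * ln (1 - s) + (1 + s) * ln (1 + s) - s\<^sup>2)
        has_real_derivative y) (at s) \<and> 0 \<le> y"
      by blast
  qed
  then show ?thesis
    using assms \<open>t < 1\<close> by (simp add: xlnx_def)
qed

lemma xlnx_mult:
  assumes "0 < x" "0 \<le> y"
  shows "xlnx (x * y) = y * xlnx x + x * xlnx y"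
  using assms by (auto simp: xlnx_def ln_mult algebra_simps)

lemma xlnx_second_difference_ge:
  fixes x h :: real
  assumes "0 < h" "h \<le> x"
  shows "h\<^sup>2 / x \<le> xlnx (x - h) - 2 * xlnx x + xlnx (x + h)"
proof -
  define t where "t = h / x"
  have "0 < x" "0 \<le> t" "t \<le> 1"
    using assms by (auto simp: t_def)
  have scale: "x - h = x * (1 - t)" "x + h = x * (1 + t)"
    using \<open>0 < x\<close> by (auto simp: t_def field_simps)
  have "xlnx (x - h) - 2 * xlnx x + xlnx (x + h) = x * (xlnx (1 - t) + xlnx (1 + t))"
    unfolding scale using \<open>0 < x\<close> \<open>0 \<le> t\<close> \<open>t \<le> 1\<close>
    by (simp add: xlnx_mult) (simp add: algebra_simps)
  also have "\<dots> \<ge> x * t\<^sup>2"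
    using square_le_xlnx_one_minus_add_xlnx_one_plus[OF \<open>0 \<le> t\<close> \<open>t \<le> 1\<close>] \<open>0 < x\<close> by simp
  finally show ?thesis
    using \<open>0 < x\<close> by (simp add: t_def power2_eq_square)
qed

lemma Phi_second_difference_ge:
  fixes x h :: real
  assumes "0 < h" "h \<le> x" "x + h \<le> 1"
  shows "6 * h\<^sup>2 / (x * (1 - x)) \<le> Phi (x - h) - 2 * Phi x + Phi (x + h)"
proof -
  have "h\<^sup>2 / x + h\<^sup>2 / (1 - x) \<le> xlnx (x - h) - 2 * xlnx x + xlnx (x + h)
      + (xlnx ((1 - x) - h) - 2 * xlnx (1 - x) + xlnx ((1 - x) + h))"
    using assms by (intro add_mono xlnx_second_difference_ge) auto
  moreover have "h\<^sup>2 / x + h\<^sup>2 / (1 - x) = h\<^sup>2 / (x * (1 - x))"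
    using assms by (simp add: field_simps)
  ultimately show ?thesis
    by (simp add: Phi_def algebra_simps)
qed

lemma mult_less_binomial: "i * k < (i + k) choose i"
proof (induction i arbitrary: k)
  case 0
  then show ?case
    by simp
next
  case (Suc i)
  note outer_IH = Suc.IH
  show ?case
  proof (induction k)
    case 0
    then show ?case
      by simp
  next
    case (Suc k)
    have "(Suc i + Suc k) choose Suc i = ((i + Suc k) choose i) + ((Suc i + k) choose Suc i)"
      by simp
    then show ?case
      using outer_IH[of "Suc k"] Suc.IH by simp
  qed
qed

lemma of_nat_mult_diff_le_binomial:
  assumes "j \<le> n"
  shows "real j * real (n - j) \<le> real (n choose j)"
proof -
  have "j * (n - j) \<le> n choose j"
    using mult_less_binomial[of j "n - j"] assms by simp
  then show ?thesis
    by (metis of_nat_le_iff of_nat_mult)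
qed

(* For k = 0 and k = n the bound is 1 / 0 = 0: rounding is exact at the endpoints. *)
lemma rounded_relative_error_le:
  fixes g :: "real \<Rightarrow> real" and a :: "nat \<Rightarrow> int"
  assumes "1 \<le> n" "g 0 \<in> \<int>" "g 1 \<in> \<int>" "k \<le> n"
    and round: "\<And>k. k \<le> n \<Longrightarrow> \<bar>of_int (a k) - g (real k / real n) * real (n choose k)\<bar> < 1"
  shows "\<bar>g (real k / real n) - of_int (a k) / real (n choose k)\<bar> \<le> 1 / (real k * real (n - k))"
proof -
  consider "k = 0" | "k = n" | "0 < k" "k < n"
    using assms by linarith
  then show ?thesis
  proof cases
    case 1
    then have "of_int (a 0) = g 0"
      using round[of 0] assms Ints_eq_abs_less1[of "of_int (a 0)" "g 0"] by simp
    then show ?thesis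
      using 1 by simp
  next
    case 2
    then have "of_int (a n) = g 1"
      using round[of n] assms Ints_eq_abs_less1[of "of_int (a n)" "g 1"] by simp
    then show ?thesis
      using 2 assms by simp
  next
    case 3
    let ?C = "real (n choose k)"
    have "0 < real k * real (n - k)"
      using 3 by simp
    moreover have "real k * real (n - k) \<le> ?C"
      using 3 by (intro of_nat_mult_diff_le_binomial) simp
    ultimately have "0 < ?C"
      by linarith
    then have "\<bar>g (real k / real n) - of_int (a k) / ?C\<bar> = \<bar>of_int (a k) - g (real k / real n) * ?C\<bar> / ?C"
      by (simp add: field_simps abs_minus_commute)
    also have "\<dots> \<le> 1 / ?C"
      using round[of k] 3 \<open>0 < ?C\<close> by (intro divide_right_mono) auto
    also have "\<dots> \<le> 1 / (real k * real (n - k))"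
      using 3 \<open>0 < real k * real (n - k)\<close> \<open>real k * real (n - k) \<le> ?C\<close> by (intro frac_le) auto
    finally show ?thesis .
  qed
qed

lemma abs_second_difference_sum_le:
  fixes d :: "nat \<Rightarrow> real"
  assumes "0 < m" "m < n"
    and d: "\<And>j. j \<le> n \<Longrightarrow> \<bar>d j\<bar> \<le> 1 / (real j * real (n - j))"
  shows "\<bar>d (m - 1)\<bar> + 2 * \<bar>d m\<bar> + \<bar>d (m + 1)\<bar> \<le> 6 / (real m * real (n - m))"
proof -
  let ?P = "real m * real (n - m)"
  have "0 < ?P"
    using assms by simp
  have neighbour: "\<bar>d j\<bar> \<le> 2 / ?P"
    if "j \<le> n" and close: "0 < j \<Longrightarrow> j < n \<Longrightarrow> m * (n - m) \<le> 2 * j * (n - j)" for j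
  proof (cases "0 < j \<and> j < n")
    case True
    then have "?P \<le> 2 * real j * real (n - j)"
      using close by (metis of_nat_le_iff of_nat_mult of_nat_numeral)
    then have "2 / (2 * real j * real (n - j)) \<le> 2 / ?P"
      using \<open>0 < ?P\<close> True assms by (intro frac_le) auto
    then show ?thesis
      using d[OF \<open>j \<le> n\<close>] by simp
  next
    case False
    then show ?thesis
      using d[OF \<open>j \<le> n\<close>] \<open>0 < ?P\<close> \<open>j \<le> n\<close> by auto
  qed
  have "\<bar>d (m - 1)\<bar> \<le> 2 / ?P"
    using assms mult_le_mono[of m "2 * (m - 1)" "n - m" "n - (m - 1)"] by (intro neighbour) auto
  moreover have "\<bar>d (m + 1)\<bar> \<le> 2 / ?P"
  proof (rule neighbour)
    assume "m + 1 < n"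
    then have "m * (n - m) \<le> (m + 1) * (2 * (n - (m + 1)))"
      by (intro mult_le_mono) auto
    then show "m * (n - m) \<le> 2 * (m + 1) * (n - (m + 1))"
      by (simp only: ac_simps)
  qed (use assms in simp)
  moreover have "2 * \<bar>d m\<bar> \<le> 2 / ?P"
    using mult_left_mono[OF d[of m], of 2] assms by simp
  ultimately have "\<bar>d (m - 1)\<bar> + 2 * \<bar>d m\<bar> + \<bar>d (m + 1)\<bar> \<le> 2 / ?P + 2 / ?P + 2 / ?P"
    by linarith
  then show ?thesis
    by simp
qed

lemma convex_on_second_difference_nonneg:
  fixes f :: "real \<Rightarrow> real"
  assumes "convex_on S f" "x - h \<in> S" "x + h \<in> S"
  shows "0 \<le> f (x - h) - 2 * f x + f (x + h)"
proof -
  have "(1 - 1/2) *\<^sub>R (x - h) + (1/2) *\<^sub>R (x + h) = x"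
    by (simp add: field_simps)
  then show ?thesis
    using convex_onD[OF assms(1), of "1/2" "x - h" "x + h"] assms by simp
qed

lemma convex_on_rounded_Bernstein:
  fixes g :: "real \<Rightarrow> real" and a :: "nat \<Rightarrow> int"
  assumes "1 \<le> n" and convex: "convex_on {0..1} (\<lambda>x. g x - Phi x)"
    and "g 0 \<in> \<int>" "g 1 \<in> \<int>"
    and round: "\<And>k. k \<le> n \<Longrightarrow> \<bar>of_int (a k) - g (real k / real n) * real (n choose k)\<bar> < 1"
  shows "convex_on {0..1} (\<lambda>x. \<Sum>k=0..n. of_int (a k) * x ^ k * (1 - x) ^ (n - k))"
proof -
  define b where "b k = of_int (a k) / real (n choose k)" for k
  define d where "d k = g (real k / real n) - b k" for k
  have "(\<lambda>x. \<Sum>k=0..n. of_int (a k) * x ^ k * (1 - x) ^ (n - k)) = bernstein_poly n b"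
    unfolding bernstein_poly_def atLeast0AtMost by (intro ext sum.cong) (auto simp: Bernstein_def b_def)
  moreover have "convex_on {0..1} (bernstein_poly n b)"
  proof (rule convex_on_bernstein_poly)
    fix k
    assume "k + 2 \<le> n"
    define m where "m = Suc k"
    define x h where "x = real m / real n" and "h = 1 / real n"
    have nodes: "real k / real n = x - h" "real (Suc m) / real n = x + h"
      using \<open>1 \<le> n\<close> by (auto simp: x_def h_def m_def field_simps)
    have "0 < h" "h \<le> x" "x + h \<le> 1"
      using \<open>k + 2 \<le> n\<close> by (auto simp: x_def h_def m_def field_simps)
    then have "6 * h\<^sup>2 / (x * (1 - x)) \<le> Phi (x - h) - 2 * Phi x + Phi (x + h)"
      by (rule Phi_second_difference_ge)
    moreover have "6 * h\<^sup>2 / (x * (1 - x)) = 6 / (real m * real (n - m))"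
      using \<open>k + 2 \<le> n\<close> by (simp add: x_def h_def m_def of_nat_diff field_simps power2_eq_square)
    moreover have "0 \<le> (g (x - h) - Phi (x - h)) - 2 * (g x - Phi x) + (g (x + h) - Phi (x + h))"
      using \<open>0 < h\<close> \<open>h \<le> x\<close> \<open>x + h \<le> 1\<close>
      by (intro convex_on_second_difference_nonneg[OF convex]) auto
    moreover have "\<bar>d (m - 1)\<bar> + 2 * \<bar>d m\<bar> + \<bar>d (m + 1)\<bar> \<le> 6 / (real m * real (n - m))"
      using \<open>k + 2 \<le> n\<close> rounded_relative_error_le[OF assms(1,3,4) _ round]
      by (intro abs_second_difference_sum_le) (auto simp: m_def d_def b_def)
    moreover have "d k - 2 * d m + d (Suc m) \<le> \<bar>d k\<bar> + 2 * \<bar>d m\<bar> + \<bar>d (Suc m)\<bar>"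
      using abs_ge_self[of "d k"] abs_ge_minus_self[of "d m"] abs_ge_self[of "d (Suc m)"] by linarith
    moreover have "fwd_diff (fwd_diff b) k = (g (x - h) - 2 * g x + g (x + h)) - (d k - 2 * d m + d (Suc m))"
      unfolding fwd_diff_def d_def nodes[symmetric] by (simp add: x_def m_def)
    ultimately show "0 \<le> fwd_diff (fwd_diff b) k"
      by (simp add: m_def)
  qed
  ultimately show ?thesis
    by simp
qed

lemma concave_on_rounded_Bernstein:
  fixes g :: "real \<Rightarrow> real" and a :: "nat \<Rightarrow> int"
  assumes "1 \<le> n" and concave: "concave_on {0..1} (\<lambda>x. g x + Phi x)"
    and "g 0 \<in> \<int>" "g 1 \<in> \<int>"
    and round: "\<And>k. k \<le> n \<Longrightarrow> \<bar>of_int (a k) - g (real k / real n) * real (n choose k)\<bar> < 1"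
  shows "concave_on {0..1} (\<lambda>x. \<Sum>k=0..n. of_int (a k) * x ^ k * (1 - x) ^ (n - k))"
proof -
  have "(\<lambda>x. - g x - Phi x) = (\<lambda>x. - (g x + Phi x))"
    by auto
  then have "convex_on {0..1} (\<lambda>x. - g x - Phi x)"
    using concave by (simp add: concave_on_def)
  moreover have "\<bar>of_int (- a k) - - g (real k / real n) * real (n choose k)\<bar> < 1" if "k \<le> n" for k
    using round[OF that] by (simp add: abs_minus_commute)
  ultimately have "convex_on {0..1} (\<lambda>x. \<Sum>k=0..n. of_int (- a k) * x ^ k * (1 - x) ^ (n - k))"
    using assms by (intro convex_on_rounded_Bernstein[where g = "\<lambda>x. - g x"]) auto
  then show ?thesis
    by (simp add: concave_on_def sum_negf[symmetric])
qed

theorem theorem1p9: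
  fixes f :: "real \<Rightarrow> real"
  assumes "f 0 \<in> \<int>" and "f 1 \<in> \<int>"
  shows "(convex_on {0..1} (\<lambda>x. f x - Phi x) \<longrightarrow>
            (\<forall>n::nat. n \<ge> 1 \<longrightarrow>
               convex_on {0..1} (Btilde n f) \<and>
               (\<forall>c. (\<forall>k\<le>n. nearest_int (f (real k / real n) * real (n choose k)) (c k))
                     \<longrightarrow> convex_on {0..1} (Bhat n c))))
       \<and> (concave_on {0..1} (\<lambda>x. f x + Phi x) \<longrightarrow>
            (\<forall>n::nat. n \<ge> 1 \<longrightarrow>
               concave_on {0..1} (Btilde n f) \<and>
               (\<forall>c. (\<forall>k\<le>n. nearest_int (f (real k / real n) * real (n choose k)) (c k))
                     \<longrightarrow> concave_on {0..1} (Bhat n c))))"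
proof -
  have floor: "\<bar>of_int \<lfloor>y\<rfloor> - y\<bar> < 1" for y :: real
    using floor_correct[of y] by linarith
  have nearest: "\<bar>of_int (c k) - f (real k / real n) * real (n choose k)\<bar> < 1"
    if "\<forall>k\<le>n. nearest_int (f (real k / real n) * real (n choose k)) (c k)" "k \<le> n" for c n k
    using that by (auto simp: nearest_int_def)
  show ?thesis
    unfolding Btilde_def[abs_def] Bhat_def[abs_def]
    using assms floor nearest
    by (auto intro!: convex_on_rounded_Bernstein concave_on_rounded_Bernstein)
qed

end
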